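(* Let $B, G, T \ge 1$ (with $G \ge 2$), and consider a policy $\pi_\theta$ and old policy $\pi_{\mathrm{old}}$. Prompts $q^{(1)},\dots,q^{(B)}$ are sampled independently from a distribution $P_Q$; for each prompt $q^{(b)}$, $G$ completions $o^{(b)}_1,\dots,o^{(b)}_G$ of $T$ tokens are generated from $\pi_{\mathrm{old}}$ and assigned rewards $r^{(b)}_i$. For completion $i$ of prompt $b$ and token $t$ let $\pi_t(\theta) := \pi_\theta(o^{(b)}_{i,t}\mid q^{(b)}, o^{(b)}_{i,1:t-1})/\pi_{\mathrm{old}}(o^{(b)}_{i,t}\mid q^{(b)}, o^{(b)}_{i,1:t-1})$, let $X_i^{(b)} := \frac{1}{T}\sum_{t=1}^T \pi_t(\theta)\nabla_\theta\log\pi_t(\theta)$, and let \[ \mathcal J_1(\theta) := \frac{1}{B}\sum_{b=1}^B \frac{1}{G}\sum_{i=1}^G \frac{1}{T}\sum_{t=1}^T \pi_t(\theta)\hat A_i^{(b)}, \] so that $\nabla_\theta \mathcal J_1(\theta) = \frac{1}{B}\sum_{b=1}^B\frac{1}{G}\sum_{i=1}^G \hat A_i^{(b)} X_i^{(b)}$, where $\hat A_i^{(b)}$ is a per-completion advantage. Assume $\|X_i^{(b)}\| \le C$ for all $i,b$. Then: (1) If $\hat A_i^{(b)}$ is the rank advantage $\hat A_i^{(b)} = 2 - (\rho_b(i)-1)\cdot\frac{4}{G-1}$, where $\rho_b$ is a bijection of $\{1,\dots,G\}$ ranking the completions of prompt $b$ by reward (highest reward gets rank $1$), then $\|\nabla_\theta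 \mathcal J_1(\theta)\| \le 2C$ almost surely. (2) If $\hat A_i^{(b)}$ is the standardized advantage $\hat A_i^{(b)} = (r_i^{(b)} - \mathrm{mean}(r_1^{(b)},\dots,r_G^{(b)}))/\mathrm{std}(r_1^{(b)},\dots,r_G^{(b)})$ and these standardized advantages are sub-Gaussian with $\psi_2$-norms bounded by a constant not depending on $i$, $b$, $G$, then $\|\nabla_\theta\mathcal J_1(\theta)\| = O_p(\sqrt{\log G})$ as $B, G \to \infty$.
   Context: $\|\cdot\|_{\psi_2}$ denotes the sub-Gaussian (Orlicz) norm. $O_p(a_n)$ denotes stochastic boundedness: the quantity divided by $a_n$ is bounded in probability. The constant $C$ may depend on $T$. *)

theory Defs
  imports "HOL-Probability.Probability"
begin

definition grad_J1 :: "nat \<Rightarrow> nat \<Rightarrow> (nat \<Rightarrow> nat \<Rightarrow> real) \<Rightarrow> (nat \<Rightarrow> nat \<Rightarrow> 'v::real_normed_vector) \<Rightarrow> 'v" where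
  "grad_J1 B G A X = (1 / real B) *\<^sub>R (\<Sum>b=1..B. (1 / real G) *\<^sub>R (\<Sum>i=1..G. A b i *\<^sub>R X b i))"

definition rank_adv :: "nat \<Rightarrow> nat \<Rightarrow> real" where
  "rank_adv G k = 2 - (real k - 1) * (4 / (real G - 1))"

definition is_reward_ranking :: "nat \<Rightarrow> (nat \<Rightarrow> real) \<Rightarrow> (nat \<Rightarrow> nat) \<Rightarrow> bool" where
  "is_reward_ranking G r \<rho> \<longleftrightarrow> bij_betw \<rho> {1..G} {1..G} \<and>
     (\<forall>i\<in>{1..G}. \<forall>j\<in>{1..G}. r i > r j \<longrightarrow> \<rho> i < \<rho> j)"

definition group_mean :: "nat \<Rightarrow> (nat \<Rightarrow> real) \<Rightarrow> real" where
  "group_mean G r = (\<Sum>i=1..G. r i) / real G"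

definition group_std :: "nat \<Rightarrow> (nat \<Rightarrow> real) \<Rightarrow> real" where
  "group_std G r = sqrt ((\<Sum>i=1..G. (r i - group_mean G r)^2) / real G)"

definition std_adv :: "nat \<Rightarrow> (nat \<Rightarrow> real) \<Rightarrow> nat \<Rightarrow> real" where
  "std_adv G r i = (r i - group_mean G r) / group_std G r"

definition psi2_norm :: "'a measure \<Rightarrow> ('a \<Rightarrow> real) \<Rightarrow> ereal" where
  "psi2_norm M Y = Inf {ereal s | s. s > 0 \<and> (\<integral>\<^sup>+ \<omega>. ennreal (exp ((Y \<omega>)^2 / s^2)) \<partial>M) \<le> 2}"

definition bounded_in_prob :: "'a measure \<Rightarrow> ('n \<Rightarrow> 'a \<Rightarrow> real) \<Rightarrow> ('n \<Rightarrow> real) \<Rightarrow> 'n filter \<Rightarrow> bool" where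
  "bounded_in_prob M Y a F \<longleftrightarrow>
     (\<forall>\<epsilon>>0. \<exists>K. eventually (\<lambda>n. measure M {\<omega>\<in>space M. \<bar>Y n \<omega> / a n\<bar> > K} \<le> \<epsilon>) F)"

end

theory Submission
  imports Defs
begin

text \<open>Both bounds hold on every sample. The gradient averages, over the prompts, the vectors
  (1/G) sum_i A_i X_i, whose norms are at most (C/G) sum_i |A_i|.
  Rank advantages lie in [-2, 2], which gives the bound 2C. Standardized advantages have
  sum_i A_i^2 = G (or all vanish), so Cauchy-Schwarz gives sum_i |A_i| <= G and the
  gradient is bounded by C deterministically. That is O_p(1), a fortiori O_p(sqrt (log G)).\<close>

lemma norm_grad_J1_le:
  fixes X :: "nat \<Rightarrow> nat \<Rightarrow> 'v::real_normed_vector"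
  assumes "B \<ge> 1" "G \<ge> 1"
    and X_le: "\<And>b i. b \<in> {1..B} \<Longrightarrow> i \<in> {1..G} \<Longrightarrow> norm (X b i) \<le> C"
    and A_le: "\<And>b. b \<in> {1..B} \<Longrightarrow> (\<Sum>i=1..G. \<bar>A b i\<bar>) \<le> real G * a"
  shows "norm (grad_J1 B G A X) \<le> a * C"
proof -
  have "C \<ge> 0"
    using X_le[of 1 1] assms(1,2) by (auto intro: order.trans[OF norm_ge_zero])
  have group_le: "norm ((1 / real G) *\<^sub>R (\<Sum>i=1..G. A b i *\<^sub>R X b i)) \<le> a * C"
    if b: "b \<in> {1..B}" for b
  proof -
    have "norm (\<Sum>i=1..G. A b i *\<^sub>R X b i) \<le> (\<Sum>i=1..G. \<bar>A b i\<bar> * norm (X b i))"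
      by (rule order.trans[OF norm_sum]) simp
    also have "\<dots> \<le> (\<Sum>i=1..G. \<bar>A b i\<bar> * C)"
      by (intro sum_mono mult_left_mono X_le b) auto
    also have "\<dots> = (\<Sum>i=1..G. \<bar>A b i\<bar>) * C"
      by (simp add: sum_distrib_right)
    also have "\<dots> \<le> real G * a * C"
      by (intro mult_right_mono A_le b \<open>C \<ge> 0\<close>)
    finally show ?thesis
      using \<open>G \<ge> 1\<close> by (simp add: divide_simps mult_ac)
  qed
  have "norm (grad_J1 B G A X)
        = (1 / real B) * norm (\<Sum>b=1..B. (1 / real G) *\<^sub>R (\<Sum>i=1..G. A b i *\<^sub>R X b i))"
    unfolding grad_J1_def by simp
  also have "\<dots> \<le> (1 / real B) * (\<Sum>b=1..B. norm ((1 / real G) *\<^sub>R (\<Sum>i=1..G. A b i *\<^sub>R X b i)))"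
    by (intro mult_left_mono norm_sum) simp
  also have "\<dots> \<le> (1 / real B) * (\<Sum>b=1..B. a * C)"
    by (intro mult_left_mono sum_mono group_le) auto
  also have "\<dots> = a * C"
    using \<open>B \<ge> 1\<close> by simp
  finally show ?thesis .
qed

lemma abs_rank_adv_le:
  assumes "G \<ge> 2" "k \<in> {1..G}"
  shows "\<bar>rank_adv G k\<bar> \<le> 2"
proof -
  have "0 \<le> (real k - 1) * (4 / (real G - 1))" "(real k - 1) * (4 / (real G - 1)) \<le> 4"
    using assms by (auto simp: field_simps)
  then show ?thesis
    unfolding rank_adv_def by linarith
qed

lemma sum_abs_rank_adv_le:
  assumes "G \<ge> 2" "\<rho> ` {1..G} \<subseteq> {1..G}"
  shows "(\<Sum>i=1..G. \<bar>rank_adv G (\<rho> i)\<bar>) \<le> real G * 2"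
proof -
  have "(\<Sum>i=1..G. \<bar>rank_adv G (\<rho> i)\<bar>) \<le> (\<Sum>i=1..G. 2)"
    by (intro sum_mono abs_rank_adv_le assms(1)) (use assms(2) in blast)
  then show ?thesis
    by simp
qed

lemma sum_abs_std_adv_le: "(\<Sum>i=1..G. \<bar>std_adv G r i\<bar>) \<le> real G"
proof (cases "group_std G r = 0")
  case True
  then show ?thesis
    by (simp add: std_adv_def)
next
  case False
  define m where "m = group_mean G r"
  define s where "s = group_std G r"
  have "s \<ge> 0"
    by (simp add: s_def group_std_def sum_nonneg)
  with False have "s > 0"
    by (simp add: s_def)
  have "G \<ge> 1"
    using False by (cases G) (auto simp: group_std_def)
  have "s\<^sup>2 = (\<Sum>i=1..G. \<bar>r i - m\<bar>\<^sup>2) / real G"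
    by (simp add: s_def m_def group_std_def sum_nonneg)
  then have s2: "real G * s\<^sup>2 = (\<Sum>i=1..G. \<bar>r i - m\<bar>\<^sup>2)"
    using \<open>G \<ge> 1\<close> by simp
  have "(\<Sum>i=1..G. \<bar>r i - m\<bar>)\<^sup>2 \<le> (\<Sum>i=1..G. \<bar>r i - m\<bar>\<^sup>2) * real G"
    using sum_squared_le_sum_of_squares[of "\<lambda>i. \<bar>r i - m\<bar>" "{1..G}"] by simp
  also have "\<dots> = (real G * s)\<^sup>2"
    by (simp only: s2[symmetric]) (simp add: power2_eq_square)
  finally have "(\<Sum>i=1..G. \<bar>r i - m\<bar>) \<le> real G * s"
    by (rule power2_le_imp_le) (use \<open>s > 0\<close> in simp)
  moreover have "(\<Sum>i=1..G. \<bar>std_adv G r i\<bar>) = (\<Sum>i=1..G. \<bar>r i - m\<bar>) / s"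
    using \<open>s > 0\<close> by (simp add: std_adv_def m_def s_def sum_divide_distrib)
  ultimately show ?thesis
    using \<open>s > 0\<close> by (simp add: divide_le_eq)
qed

lemma bounded_in_prob_if_uniformly_bounded:
  assumes "eventually (\<lambda>n. \<forall>\<omega>\<in>space M. \<bar>Y n \<omega> / a n\<bar> \<le> K) F"
  shows "bounded_in_prob M Y a F"
  unfolding bounded_in_prob_def
proof (intro allI impI exI)
  fix \<epsilon> :: real
  assume "\<epsilon> > 0"
  show "eventually (\<lambda>n. measure M {\<omega>\<in>space M. \<bar>Y n \<omega> / a n\<bar> > K} \<le> \<epsilon>) F"
  proof (rule eventually_mono[OF assms])
    fix n
    assume "\<forall>\<omega>\<in>space M. \<bar>Y n \<omega> / a n\<bar> \<le> K"
    then have "{\<omega>\<in>space M. \<bar>Y n \<omega> / a n\<bar> > K} = {}"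
      by (auto simp: not_less[symmetric])
    then show "measure M {\<omega>\<in>space M. \<bar>Y n \<omega> / a n\<bar> > K} \<le> \<epsilon>"
      using \<open>\<epsilon> > 0\<close> by (metis measure_empty less_imp_le)
  qed
qed

lemma sqrt_ln_ge_1:
  assumes "G \<ge> 3"
  shows "sqrt (ln (real G)) \<ge> 1"
proof -
  have "exp 1 \<le> real G"
    using exp_le assms by linarith
  then have "1 \<le> ln (real G)"
    by (subst ln_ge_iff) (use assms in auto)
  then show ?thesis
    by simp
qed

theorem theoremD1:
  fixes M :: "'a measure" and PQ :: "'q measure" and C :: real
    and q :: "nat \<Rightarrow> nat \<Rightarrow> nat \<Rightarrow> 'a \<Rightarrow> 'q"
    and r :: "nat \<Rightarrow> nat \<Rightarrow> nat \<Rightarrow> nat \<Rightarrow> 'a \<Rightarrow> real"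
    and X :: "nat \<Rightarrow> nat \<Rightarrow> nat \<Rightarrow> nat \<Rightarrow> 'a \<Rightarrow> 'v::euclidean_space"
  assumes "prob_space M" and "prob_space PQ"
    and prompts_iid: "\<And>B G. prob_space.indep_vars M (\<lambda>_. PQ) (q B G) {1..B}"
    and prompts_dist: "\<And>B G b. b \<in> {1..B} \<Longrightarrow> distr M PQ (q B G b) = PQ"
    and r_meas: "\<And>B G b i. r B G b i \<in> borel_measurable M"
    and X_meas: "\<And>B G b i. X B G b i \<in> borel_measurable M"
    and X_bound: "\<And>B G b i \<omega>. b \<in> {1..B} \<Longrightarrow> i \<in> {1..G} \<Longrightarrow> \<omega> \<in> space M \<Longrightarrow>
                    norm (X B G b i \<omega>) \<le> C"
  shows
    "(\<forall>B G (\<rho> :: nat \<Rightarrow> nat \<Rightarrow> nat \<Rightarrow> 'a \<Rightarrow> nat \<Rightarrow> nat). B \<ge> 1 \<longrightarrow> G \<ge> 2 \<longrightarrow>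
        (\<forall>\<omega>\<in>space M. \<forall>b\<in>{1..B}. is_reward_ranking G (\<lambda>i. r B G b i \<omega>) (\<rho> B G b \<omega>)) \<longrightarrow>
        (AE \<omega> in M. norm (grad_J1 B G (\<lambda>b i. rank_adv G (\<rho> B G b \<omega> i)) (\<lambda>b i. X B G b i \<omega>)) \<le> 2 * C))
     \<and>
     ((\<exists>K::real. \<forall>B G b i. B \<ge> 1 \<longrightarrow> G \<ge> 2 \<longrightarrow> b \<in> {1..B} \<longrightarrow> i \<in> {1..G} \<longrightarrow>
         psi2_norm M (\<lambda>\<omega>. std_adv G (\<lambda>j. r B G b j \<omega>) i) \<le> ereal K) \<longrightarrow>
      bounded_in_prob M
        (\<lambda>(B, G) \<omega>. norm (grad_J1 B G (\<lambda>b i. std_adv G (\<lambda>j. r B G b j \<omega>) i) (\<lambda>b i. X B G b i \<omega>)))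
        (\<lambda>(B, G). sqrt (ln (real G)))
        (at_top \<times>\<^sub>F at_top))"
proof (intro conjI allI impI AE_I2)
  fix B G :: nat and \<rho> :: "nat \<Rightarrow> nat \<Rightarrow> nat \<Rightarrow> 'a \<Rightarrow> nat \<Rightarrow> nat" and \<omega>
  assume "B \<ge> 1" "G \<ge> 2" "\<omega> \<in> space M"
    and "\<forall>\<omega>\<in>space M. \<forall>b\<in>{1..B}. is_reward_ranking G (\<lambda>i. r B G b i \<omega>) (\<rho> B G b \<omega>)"
  then have "\<rho> B G b \<omega> ` {1..G} \<subseteq> {1..G}" if "b \<in> {1..B}" for b
    using that by (auto simp: is_reward_ranking_def bij_betw_def)
  then show "norm (grad_J1 B G (\<lambda>b i. rank_adv G (\<rho> B G b \<omega> i)) (\<lambda>b i. X B G b i \<omega>)) \<le> 2 * C"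
    using \<open>B \<ge> 1\<close> \<open>G \<ge> 2\<close> \<open>\<omega> \<in> space M\<close>
    by (intro norm_grad_J1_le X_bound sum_abs_rank_adv_le) auto
next
  have "norm (grad_J1 B G (\<lambda>b i. std_adv G (\<lambda>j. r B G b j \<omega>) i) (\<lambda>b i. X B G b i \<omega>))
          / sqrt (ln (real G)) \<le> C"
    if "B \<ge> 1" "G \<ge> 3" "\<omega> \<in> space M" for B G \<omega>
  proof -
    let ?g = "grad_J1 B G (\<lambda>b i. std_adv G (\<lambda>j. r B G b j \<omega>) i) (\<lambda>b i. X B G b i \<omega>)"
    have "norm ?g \<le> 1 * C"
      using that sum_abs_std_adv_le by (intro norm_grad_J1_le X_bound) auto
    moreover have "norm ?g / sqrt (ln (real G)) \<le> norm ?g / 1"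
      using sqrt_ln_ge_1[OF \<open>G \<ge> 3\<close>] by (intro divide_left_mono) auto
    ultimately show ?thesis
      by simp
  qed
  moreover have "eventually (\<lambda>n. fst n \<ge> (1::nat) \<and> snd n \<ge> (3::nat)) (at_top \<times>\<^sub>F at_top)"
    by (intro eventually_prodI eventually_ge_at_top)
  ultimately show "bounded_in_prob M
        (\<lambda>(B, G) \<omega>. norm (grad_J1 B G (\<lambda>b i. std_adv G (\<lambda>j. r B G b j \<omega>) i) (\<lambda>b i. X B G b i \<omega>)))
        (\<lambda>(B, G). sqrt (ln (real G)))
        (at_top \<times>\<^sub>F at_top)"
    by (intro bounded_in_prob_if_uniformly_bounded[where K = C])
      (auto elim!: eventually_mono simp: case_prod_beta)
qed

end
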